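(* In the setting below, for every $\nu\subseteq\{0,\dots,n\}$ with $|\nu|=n$, $$\|P^\pi_\nu\|\le\sup_{g\in K}\|\pi(g)\|^2.$$
   Context: Setting: $X$ is a pure $n$-dimensional partite simplicial complex (vertex set partitioned into $V_0,\dots,V_n$, each $n$-simplex having one vertex in each $V_i$; $\mathrm{type}(\tau)=\{i:\tau\cap V_i\neq\emptyset\}$), gallery connected, with all $1$-dimensional links (links of $(n-2)$-simplices) connected finite graphs. $G$ is a locally compact unimodular group with Haar measure $\mu$ acting cocompactly on $X$ by type-preserving simplicial automorphisms, with $G_\tau$ open compact for every $\tau\in X(n-2)\cup X(n-1)\cup X(n)$; $\pi$ is a strongly continuous representation of $G$ on a Banach space $\mathbb{E}$ with norm $|\cdot|$. For $k=n-2,n-1,n$, $D(k)$ is a set of representatives of the $G$-orbits on $X(k)$, chosen so that for $k_1<k_2$ every $\tau\in D(k_1)$ is contained in some $\sigma\in D(k_2)$. $K=\{g\in G:\exists\sigma,\sigma'\in D(n),\ |g.\sigma\cap\sigma'|\ge n-1\}$. $C(X(n),\pi)$ is the space of maps $\phi:X(n)\to\mathbb{E}$ with $\phi(g.\sigma)=\pi(g)\phi(\sigma)$, normed by $\|\phi\|^2=\sum_{\sigma\in D(n)}\frac{1}{\mu(G_\sigma)}|\phi(\sigma)|^2$. For $\nu\subseteq\{0,\dots,n\}$ with $|\nu|\in\{n-1,n\}$, write $\sigma\sim_\nu\sigma'$ if there is a simplex $\tau\subseteq\sigma\cap\sigma'$ with $\mathrm{type}(\tau)=\nu$, and $P^\pi_\nu\phi(\sigma)=\frac{1}{|\{\sigma':\sigma'\sim_\nu\sigma\}|}\sum_{\sigma'\sim_\nu\sigma}\phi(\sigma')$,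 an operator on $C(X(n),\pi)$. *)

theory Defs
  imports "HOL-Analysis.Analysis" "HOL-Algebra.Group"
begin

text \<open>A simplicial complex on vertex type 'v is a nonempty, downward closed family
  of finite vertex sets (the empty simplex is included). The k-simplices are the
  simplices with k+1 vertices; we index them by cardinality: cfaces X m = simplices
  with exactly m vertices, so X(k) = cfaces X (k+1).\<close>

definition abstract_simplicial_complex :: "'v set set \<Rightarrow> bool" where
  "abstract_simplicial_complex X \<longleftrightarrow> X \<noteq> {} \<and> (\<forall>s\<in>X. finite s) \<and> (\<forall>s\<in>X. \<forall>t. t \<subseteq> s \<longrightarrow> t \<in> X)"

definition cfaces :: "'v set set \<Rightarrow> nat \<Rightarrow> 'v set set" where
  "cfaces X m = {s \<in> X. card s = m}"

definition pure_dim :: "'v set set \<Rightarrow> nat \<Rightarrow> bool" where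
  "pure_dim X n \<longleftrightarrow> cfaces X (n+1) \<noteq> {} \<and> (\<forall>s\<in>X. card s \<le> n+1)
     \<and> (\<forall>s\<in>X. \<exists>t\<in>cfaces X (n+1). s \<subseteq> t)"

definition partite :: "'v set set \<Rightarrow> nat \<Rightarrow> ('v \<Rightarrow> nat) \<Rightarrow> bool" where
  "partite X n vtype \<longleftrightarrow> (\<forall>v\<in>\<Union>X. vtype v \<le> n)
     \<and> (\<forall>\<sigma>\<in>cfaces X (n+1). \<forall>i\<le>n. \<exists>!v. v \<in> \<sigma> \<and> vtype v = i)"

definition stype :: "('v \<Rightarrow> nat) \<Rightarrow> 'v set \<Rightarrow> nat set" where
  "stype vtype \<tau> = {i. \<exists>v\<in>\<tau>. vtype v = i}"

definition gallery_connected :: "'v set set \<Rightarrow> nat \<Rightarrow> bool" where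
  "gallery_connected X n \<longleftrightarrow>
     (\<forall>\<sigma>\<in>cfaces X (n+1). \<forall>\<sigma>'\<in>cfaces X (n+1).
        (\<lambda>a b. a \<in> cfaces X (n+1) \<and> b \<in> cfaces X (n+1) \<and> card (a \<inter> b) = n)\<^sup>*\<^sup>* \<sigma> \<sigma>')"

definition link :: "'v set set \<Rightarrow> 'v set \<Rightarrow> 'v set set" where
  "link X \<tau> = {\<eta> \<in> X. \<eta> \<inter> \<tau> = {} \<and> \<eta> \<union> \<tau> \<in> X}"

definition link_connected_finite_graph :: "'v set set \<Rightarrow> 'v set \<Rightarrow> bool" where
  "link_connected_finite_graph X \<tau> \<longleftrightarrow>
     (let V = {v. {v} \<in> link X \<tau>} in
       finite V \<and> V \<noteq> {} \<and>
       (\<forall>u\<in>V. \<forall>w\<in>V. (\<lambda>a b. a \<in> V \<and> b \<in> V \<and> a \<noteq> b \<and> {a, b} \<in> link X \<tau>)\<^sup>*\<^sup>* u w))"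

definition topological_group :: "'g monoid \<Rightarrow> 'g topology \<Rightarrow> bool" where
  "topological_group G T \<longleftrightarrow> group G \<and> topspace T = carrier G
     \<and> continuous_map (prod_topology T T) T (\<lambda>(x, y). x \<otimes>\<^bsub>G\<^esub> y)
     \<and> continuous_map T T (\<lambda>x. inv\<^bsub>G\<^esub> x)"

definition locally_compact_group :: "'g monoid \<Rightarrow> 'g topology \<Rightarrow> bool" where
  "locally_compact_group G T \<longleftrightarrow> topological_group G T \<and> Hausdorff_space T
     \<and> locally_compact_space T"

definition left_haar_measure :: "'g monoid \<Rightarrow> 'g topology \<Rightarrow> 'g measure \<Rightarrow> bool" where
  "left_haar_measure G T \<mu> \<longleftrightarrow>
     sets \<mu> = sets (sigma (topspace T) (Collect (openin T)))
     \<and> (\<forall>C. compactin T C \<longrightarrow> emeasure \<mu> C < \<infinity>)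
     \<and> (\<forall>U. openin T U \<and> U \<noteq> {} \<longrightarrow> emeasure \<mu> U > 0)
     \<and> (\<forall>A\<in>sets \<mu>. emeasure \<mu> A = (INF U\<in>{U. openin T U \<and> A \<subseteq> U}. emeasure \<mu> U))
     \<and> (\<forall>U. openin T U \<longrightarrow> emeasure \<mu> U = (SUP C\<in>{C. compactin T C \<and> C \<subseteq> U}. emeasure \<mu> C))
     \<and> (\<forall>g\<in>carrier G. \<forall>A\<in>sets \<mu>. emeasure \<mu> ((\<lambda>x. g \<otimes>\<^bsub>G\<^esub> x) ` A) = emeasure \<mu> A)"

definition unimodular_haar :: "'g monoid \<Rightarrow> 'g topology \<Rightarrow> 'g measure \<Rightarrow> bool" where
  "unimodular_haar G T \<mu> \<longleftrightarrow> left_haar_measure G T \<mu>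
     \<and> (\<forall>g\<in>carrier G. \<forall>A\<in>sets \<mu>. emeasure \<mu> ((\<lambda>x. x \<otimes>\<^bsub>G\<^esub> g) ` A) = emeasure \<mu> A)"

definition type_preserving_simplicial_action ::
  "'g monoid \<Rightarrow> ('g \<Rightarrow> 'v \<Rightarrow> 'v) \<Rightarrow> 'v set set \<Rightarrow> ('v \<Rightarrow> nat) \<Rightarrow> bool" where
  "type_preserving_simplicial_action G act X vtype \<longleftrightarrow>
     (\<forall>v\<in>\<Union>X. act \<one>\<^bsub>G\<^esub> v = v)
     \<and> (\<forall>g\<in>carrier G. \<forall>h\<in>carrier G. \<forall>v\<in>\<Union>X. act (g \<otimes>\<^bsub>G\<^esub> h) v = act g (act h v))
     \<and> (\<forall>g\<in>carrier G. \<forall>s\<in>X. act g ` s \<in> X)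
     \<and> (\<forall>g\<in>carrier G. \<forall>v\<in>\<Union>X. vtype (act g v) = vtype v)"

definition stab :: "'g monoid \<Rightarrow> ('g \<Rightarrow> 'v \<Rightarrow> 'v) \<Rightarrow> 'v set \<Rightarrow> 'g set" where
  "stab G act \<tau> = {g \<in> carrier G. act g ` \<tau> = \<tau>}"

definition orbit :: "'g monoid \<Rightarrow> ('g \<Rightarrow> 'v \<Rightarrow> 'v) \<Rightarrow> 'v set \<Rightarrow> 'v set set" where
  "orbit G act \<tau> = (\<lambda>g. act g ` \<tau>) ` carrier G"

definition cocompact_action :: "'g monoid \<Rightarrow> ('g \<Rightarrow> 'v \<Rightarrow> 'v) \<Rightarrow> 'v set set \<Rightarrow> bool" where
  "cocompact_action G act X \<longleftrightarrow> finite (orbit G act ` X)"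

definition orbit_representatives ::
  "'g monoid \<Rightarrow> ('g \<Rightarrow> 'v \<Rightarrow> 'v) \<Rightarrow> 'v set set \<Rightarrow> 'v set set \<Rightarrow> bool" where
  "orbit_representatives G act Y D \<longleftrightarrow> D \<subseteq> Y
     \<and> (\<forall>\<tau>\<in>Y. \<exists>\<rho>\<in>D. \<tau> \<in> orbit G act \<rho>)
     \<and> (\<forall>\<rho>\<in>D. \<forall>\<rho>'\<in>D. \<rho>' \<in> orbit G act \<rho> \<longrightarrow> \<rho> = \<rho>')"

definition strongly_continuous_rep ::
  "'g monoid \<Rightarrow> 'g topology \<Rightarrow> ('g \<Rightarrow> ('e::banach \<Rightarrow>\<^sub>L 'e)) \<Rightarrow> bool" where
  "strongly_continuous_rep G T \<pi> \<longleftrightarrow>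
     \<pi> \<one>\<^bsub>G\<^esub> = id_blinfun
     \<and> (\<forall>g\<in>carrier G. \<forall>h\<in>carrier G. \<pi> (g \<otimes>\<^bsub>G\<^esub> h) = \<pi> g o\<^sub>L \<pi> h)
     \<and> (\<forall>v. continuous_map T euclidean (\<lambda>g. \<pi> g v))"

definition equivariant_maps ::
  "'g monoid \<Rightarrow> ('g \<Rightarrow> 'v \<Rightarrow> 'v) \<Rightarrow> 'v set set \<Rightarrow> nat \<Rightarrow> ('g \<Rightarrow> ('e::banach \<Rightarrow>\<^sub>L 'e))
     \<Rightarrow> ('v set \<Rightarrow> 'e) set" where
  "equivariant_maps G act X n \<pi> =
     {\<phi>. (\<forall>\<sigma>. \<sigma> \<notin> cfaces X (n+1) \<longrightarrow> \<phi> \<sigma> = 0)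
        \<and> (\<forall>g\<in>carrier G. \<forall>\<sigma>\<in>cfaces X (n+1). \<phi> (act g ` \<sigma>) = \<pi> g (\<phi> \<sigma>))}"

definition cnorm :: "'g measure \<Rightarrow> 'g monoid \<Rightarrow> ('g \<Rightarrow> 'v \<Rightarrow> 'v) \<Rightarrow> 'v set set
     \<Rightarrow> ('v set \<Rightarrow> 'e::banach) \<Rightarrow> real" where
  "cnorm \<mu> G act Dn \<phi> = sqrt (\<Sum>\<sigma>\<in>Dn. (norm (\<phi> \<sigma>))\<^sup>2 / measure \<mu> (stab G act \<sigma>))"

definition nu_adj :: "'v set set \<Rightarrow> ('v \<Rightarrow> nat) \<Rightarrow> nat set \<Rightarrow> 'v set \<Rightarrow> 'v set \<Rightarrow> bool" where
  "nu_adj X vtype \<nu> \<sigma> \<sigma>' \<longleftrightarrow> (\<exists>\<tau>\<in>X. \<tau> \<subseteq> \<sigma> \<inter> \<sigma>' \<and> stype vtype \<tau> = \<nu>)"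

definition P_op :: "'v set set \<Rightarrow> nat \<Rightarrow> ('v \<Rightarrow> nat) \<Rightarrow> nat set
     \<Rightarrow> ('v set \<Rightarrow> 'e::banach) \<Rightarrow> ('v set \<Rightarrow> 'e)" where
  "P_op X n vtype \<nu> \<phi> \<sigma> =
     (if \<sigma> \<in> cfaces X (n+1) then
        (let N = {\<sigma>'\<in>cfaces X (n+1). nu_adj X vtype \<nu> \<sigma> \<sigma>'} in
          (1 / real (card N)) *\<^sub>R (\<Sum>\<sigma>'\<in>N. \<phi> \<sigma>'))
      else 0)"

definition op_norm_on :: "'a set \<Rightarrow> ('a \<Rightarrow> real) \<Rightarrow> ('a \<Rightarrow> 'a) \<Rightarrow> ereal" where
  "op_norm_on C N T = (SUP \<phi>\<in>{\<phi>\<in>C. N \<phi> \<noteq> 0}. ereal (N (T \<phi>) / N \<phi>))"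

definition Kset :: "'g monoid \<Rightarrow> ('g \<Rightarrow> 'v \<Rightarrow> 'v) \<Rightarrow> nat \<Rightarrow> 'v set set \<Rightarrow> 'g set" where
  "Kset G act n Dn = {g \<in> carrier G. \<exists>\<sigma>\<in>Dn. \<exists>\<sigma>'\<in>Dn. card (act g ` \<sigma> \<inter> \<sigma>') \<ge> n - 1}"

end

theory Submission
  imports Defs
begin

text \<open>
  Let \<open>c = sup\<^sub>K \<parallel>\<pi>(g)\<parallel>\<^sup>2\<close>. Every \<open>\<nu>\<close>-neighbour \<open>\<sigma>'\<close> of a representative chamber
  \<open>\<sigma> \<in> D(n)\<close> is a translate \<open>g \<rho>\<close> of its own representative \<open>\<rho> \<in> D(n)\<close>, and \<open>g \<in> K\<close>
  because \<open>g \<rho> \<inter> \<sigma>\<close> contains the panel of type \<open>\<nu>\<close> of \<open>\<sigma>\<close>. Hence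
  \<open>|\<phi>(\<sigma>')|\<^sup>2 \<le> c |\<phi>(\<rho>)|\<^sup>2\<close>, and by Cauchy-Schwarz \<open>|P\<^sub>\<nu>\<phi>(\<sigma>)|\<^sup>2\<close> is at most \<open>c\<close> times the
  average of the \<open>G\<close>-invariant function \<open>F(\<sigma>') = |\<phi>(\<rho>)|\<^sup>2\<close> over the chambers at that panel.

  Averaging over the chambers at a panel does not change the sum of a \<open>G\<close>-invariant
  function weighted by \<open>1/\<mu>(G\<^sub>\<sigma>)\<close>: by unimodularity \<open>\<mu>(G\<^sub>\<sigma>)\<close> is constant on orbits, and
  \<open>\<mu>(G\<^sub>\<tau>) = |G\<^sub>\<tau> \<sigma>| \<mu>(G\<^sub>\<sigma>)\<close> for the panel \<open>\<tau>\<close> of \<open>\<sigma>\<close>, so both sums equal the sum over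
  representative panels \<open>\<tau>\<close> of \<open>(\<Sum>\<sigma>\<supseteq>\<tau>. F(\<sigma>)) / \<mu>(G\<^sub>\<tau>)\<close>. This gives
  \<open>\<parallel>P\<^sub>\<nu>\<phi>\<parallel> \<le> \<surd>c \<parallel>\<phi>\<parallel> \<le> c \<parallel>\<phi>\<parallel>\<close>, the last step because \<open>1 \<in> K\<close> forces \<open>c \<ge> 1\<close>.
\<close>

section \<open>Translations and Haar measure\<close>

lemma topological_group_translations_continuous:
  assumes "topological_group G T" "g \<in> carrier G"
  shows "continuous_map T T (\<lambda>x. g \<otimes>\<^bsub>G\<^esub> x)" "continuous_map T T (\<lambda>x. x \<otimes>\<^bsub>G\<^esub> g)"
proof -
  have mult: "continuous_map (prod_topology T T) T (\<lambda>(x, y). x \<otimes>\<^bsub>G\<^esub> y)"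
    and g: "g \<in> topspace T"
    using assms unfolding topological_group_def by auto
  have "continuous_map T (prod_topology T T) (\<lambda>x. (g, x))"
    and "continuous_map T (prod_topology T T) (\<lambda>x. (x, g))"
    using g by (auto intro: continuous_map_pairedI)
  from this[THEN continuous_map_compose, OF mult]
  show "continuous_map T T (\<lambda>x. g \<otimes>\<^bsub>G\<^esub> x)" "continuous_map T T (\<lambda>x. x \<otimes>\<^bsub>G\<^esub> g)"
    by (simp_all add: o_def)
qed

lemma topological_group_translations_homeomorphic:
  assumes "topological_group G T" "g \<in> carrier G"
  shows "homeomorphic_map T T (\<lambda>x. g \<otimes>\<^bsub>G\<^esub> x)" "homeomorphic_map T T (\<lambda>x. x \<otimes>\<^bsub>G\<^esub> g)"
proof -
  interpret group G using assms(1) by (simp add: topological_group_def)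
  have top: "topspace T = carrier G" using assms(1) by (simp add: topological_group_def)
  note cont = topological_group_translations_continuous[OF assms(1)]
  have ig: "inv\<^bsub>G\<^esub> g \<in> carrier G" using assms(2) by simp
  have "homeomorphic_maps T T (\<lambda>x. g \<otimes>\<^bsub>G\<^esub> x) (\<lambda>x. inv\<^bsub>G\<^esub> g \<otimes>\<^bsub>G\<^esub> x)"
    unfolding homeomorphic_maps_def top
    using cont[OF assms(2)] cont[OF ig] assms(2) by (simp add: m_assoc[symmetric])
  moreover have "homeomorphic_maps T T (\<lambda>x. x \<otimes>\<^bsub>G\<^esub> g) (\<lambda>x. x \<otimes>\<^bsub>G\<^esub> inv\<^bsub>G\<^esub> g)"
    unfolding homeomorphic_maps_def top
    using cont[OF assms(2)] cont[OF ig] assms(2) by (simp add: m_assoc)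
  ultimately show "homeomorphic_map T T (\<lambda>x. g \<otimes>\<^bsub>G\<^esub> x)" "homeomorphic_map T T (\<lambda>x. x \<otimes>\<^bsub>G\<^esub> g)"
    unfolding homeomorphic_map_maps by blast+
qed

lemma topological_group_translations_open:
  assumes "topological_group G T" "g \<in> carrier G" "openin T U"
  shows "openin T ((\<lambda>x. g \<otimes>\<^bsub>G\<^esub> x) ` U)" "openin T ((\<lambda>x. x \<otimes>\<^bsub>G\<^esub> g) ` U)"
  using topological_group_translations_homeomorphic[OF assms(1,2), THEN homeomorphic_map_openness]
    openin_subset[OF assms(3)] assms(3) by blast+

lemma left_haar_measure_openin_sets:
  assumes "left_haar_measure G T \<mu>" "openin T U"
  shows "U \<in> sets \<mu>"
proof -
  have "Collect (openin T) \<subseteq> Pow (topspace T)" using openin_subset by blast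
  then have "sets \<mu> = sigma_sets (topspace T) (Collect (openin T))"
    using assms(1) unfolding left_haar_measure_def by (simp add: sets_measure_of)
  then show ?thesis using assms(2) by auto
qed

lemma left_haar_measure_open_compact_pos:
  assumes "left_haar_measure G T \<mu>" "openin T U" "compactin T U" "U \<noteq> {}"
  shows "measure \<mu> U > 0"
proof -
  have "0 < emeasure \<mu> U" "emeasure \<mu> U < \<infinity>"
    using assms unfolding left_haar_measure_def by auto
  then show ?thesis by (simp add: measure_def enn2real_positive_iff)
qed

lemma unimodular_haar_conjugation_invariant:
  assumes "topological_group G T" "unimodular_haar G T \<mu>" "g \<in> carrier G" "openin T U"
  shows "emeasure \<mu> ((\<lambda>x. g \<otimes>\<^bsub>G\<^esub> x) ` (\<lambda>x. x \<otimes>\<^bsub>G\<^esub> inv\<^bsub>G\<^esub> g) ` U) = emeasure \<mu> U"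
proof -
  have haar: "left_haar_measure G T \<mu>" using assms(2) by (simp add: unimodular_haar_def)
  have inv: "inv\<^bsub>G\<^esub> g \<in> carrier G"
    using assms(1,3) by (simp add: topological_group_def group.inv_closed)
  have "(\<lambda>x. x \<otimes>\<^bsub>G\<^esub> inv\<^bsub>G\<^esub> g) ` U \<in> sets \<mu>"
    using topological_group_translations_open(2)[OF assms(1) inv assms(4)]
    by (rule left_haar_measure_openin_sets[OF haar])
  then have "emeasure \<mu> ((\<lambda>x. g \<otimes>\<^bsub>G\<^esub> x) ` (\<lambda>x. x \<otimes>\<^bsub>G\<^esub> inv\<^bsub>G\<^esub> g) ` U)
      = emeasure \<mu> ((\<lambda>x. x \<otimes>\<^bsub>G\<^esub> inv\<^bsub>G\<^esub> g) ` U)"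
    using haar assms(3) by (simp add: left_haar_measure_def)
  also have "\<dots> = emeasure \<mu> U"
    using assms(2) inv left_haar_measure_openin_sets[OF haar assms(4)]
    by (simp add: unimodular_haar_def)
  finally show ?thesis .
qed

lemma left_haar_measure_disjoint_translates:
  assumes "topological_group G T" "left_haar_measure G T \<mu>"
    and "finite I" "disjoint_family_on C I"
    and translate: "\<And>i. i \<in> I \<Longrightarrow> \<exists>h\<in>carrier G. C i = (\<lambda>x. h \<otimes>\<^bsub>G\<^esub> x) ` L"
    and "openin T L" "compactin T L"
  shows "measure \<mu> (\<Union>i\<in>I. C i) = real (card I) * measure \<mu> L"
proof -
  have C: "C i \<in> sets \<mu>" "emeasure \<mu> (C i) = emeasure \<mu> L" if i: "i \<in> I" for i
  proof -
    obtain h where h: "h \<in> carrier G" "C i = (\<lambda>x. h \<otimes>\<^bsub>G\<^esub> x) ` L"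
      using translate[OF i] by blast
    show "C i \<in> sets \<mu>"
      unfolding h(2) using topological_group_translations_open(1)[OF assms(1) h(1) assms(6)]
      by (rule left_haar_measure_openin_sets[OF assms(2)])
    show "emeasure \<mu> (C i) = emeasure \<mu> L"
      using assms(2) h left_haar_measure_openin_sets[OF assms(2,6)]
      by (simp add: left_haar_measure_def)
  qed
  have "emeasure \<mu> L \<noteq> \<infinity>" using assms(2,7) by (auto simp: left_haar_measure_def)
  then have "measure \<mu> (\<Union>i\<in>I. C i) = (\<Sum>i\<in>I. measure \<mu> (C i))"
    using assms(3,4) C by (intro measure_finite_Union) auto
  also have "\<dots> = (\<Sum>i\<in>I. measure \<mu> L)" using C by (simp add: measure_def)
  finally show ?thesis by simp
qed

section \<open>Group actions on simplicial complexes\<close>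

lemma mem_orbit_iff: "a \<in> orbit G act s \<longleftrightarrow> (\<exists>g\<in>carrier G. a = act g ` s)"
  unfolding orbit_def by auto

lemma (in group) inv_mult_cancel_left [simp]:
  "g \<in> carrier G \<Longrightarrow> x \<in> carrier G \<Longrightarrow> inv g \<otimes> (g \<otimes> x) = x"
  and mult_inv_cancel_left [simp]:
  "g \<in> carrier G \<Longrightarrow> x \<in> carrier G \<Longrightarrow> g \<otimes> (inv g \<otimes> x) = x"
  by (simp_all add: m_assoc[symmetric])

lemma stype_eq_image: "stype vtype \<tau> = vtype ` \<tau>"
  unfolding stype_def by auto

locale simplicial_group_action = group G
  for G :: "'g monoid" (structure) and act :: "'g \<Rightarrow> 'v \<Rightarrow> 'v" and X :: "'v set set"
    and vtype :: "'v \<Rightarrow> nat" +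
  assumes complex: "abstract_simplicial_complex X"
    and action: "type_preserving_simplicial_action G act X vtype"
begin

lemma act_one: "v \<in> \<Union>X \<Longrightarrow> act \<one> v = v"
  and act_mult: "g \<in> carrier G \<Longrightarrow> h \<in> carrier G \<Longrightarrow> v \<in> \<Union>X \<Longrightarrow> act (g \<otimes> h) v = act g (act h v)"
  and act_simplex: "g \<in> carrier G \<Longrightarrow> s \<in> X \<Longrightarrow> act g ` s \<in> X"
  and vtype_act: "g \<in> carrier G \<Longrightarrow> v \<in> \<Union>X \<Longrightarrow> vtype (act g v) = vtype v"
  using action unfolding type_preserving_simplicial_action_def by auto

lemma simplex_finite: "s \<in> X \<Longrightarrow> finite s"
  and simplex_subset: "s \<in> X \<Longrightarrow> t \<subseteq> s \<Longrightarrow> t \<in> X"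
  using complex unfolding abstract_simplicial_complex_def by auto

lemma act_vertex: "g \<in> carrier G \<Longrightarrow> v \<in> \<Union>X \<Longrightarrow> act g v \<in> \<Union>X"
  using act_simplex[of g "{v}"] simplex_subset[of _ "{v}"] by blast

lemma act_inv_act: "g \<in> carrier G \<Longrightarrow> v \<in> \<Union>X \<Longrightarrow> act (inv g) (act g v) = v"
  by (simp add: act_mult[symmetric] act_one)

lemma inj_on_act: "g \<in> carrier G \<Longrightarrow> inj_on (act g) (\<Union>X)"
  by (metis act_inv_act inj_onI)

lemma image_act_subset: "g \<in> carrier G \<Longrightarrow> s \<subseteq> \<Union>X \<Longrightarrow> act g ` s \<subseteq> \<Union>X"
  using act_vertex by blast

lemma image_act_one: "s \<subseteq> \<Union>X \<Longrightarrow> act \<one> ` s = s"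
  using act_one by force

lemma image_act_mult:
  "g \<in> carrier G \<Longrightarrow> h \<in> carrier G \<Longrightarrow> s \<subseteq> \<Union>X \<Longrightarrow> act (g \<otimes> h) ` s = act g ` act h ` s"
  unfolding image_image by (intro image_cong refl act_mult) auto

lemma image_act_inv: "g \<in> carrier G \<Longrightarrow> s \<subseteq> \<Union>X \<Longrightarrow> act (inv g) ` act g ` s = s"
  by (simp add: image_act_mult[symmetric] image_act_one)

lemma image_act_inv': "g \<in> carrier G \<Longrightarrow> s \<subseteq> \<Union>X \<Longrightarrow> act g ` act (inv g) ` s = s"
  using image_act_inv[of "inv g"] by simp

lemma inj_on_image_act: "g \<in> carrier G \<Longrightarrow> inj_on ((`) (act g)) (Pow (\<Union>X))"
  by (metis PowD image_act_inv inj_onI)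

lemma card_image_act: "g \<in> carrier G \<Longrightarrow> s \<subseteq> \<Union>X \<Longrightarrow> card (act g ` s) = card s"
  by (meson card_image inj_on_act inj_on_subset)

lemma cfaces_subset: "cfaces X m \<subseteq> X"
  unfolding cfaces_def by blast

lemma cfaces_simplex: "\<sigma> \<in> cfaces X m \<Longrightarrow> \<sigma> \<in> X"
  and cfaces_card: "\<sigma> \<in> cfaces X m \<Longrightarrow> card \<sigma> = m"
  and cfaces_vertices: "\<sigma> \<in> cfaces X m \<Longrightarrow> \<sigma> \<subseteq> \<Union>X"
  unfolding cfaces_def by auto

lemma image_act_cfaces: "g \<in> carrier G \<Longrightarrow> s \<in> cfaces X m \<Longrightarrow> act g ` s \<in> cfaces X m"
  unfolding cfaces_def using act_simplex card_image_act[OF _ Union_upper] by auto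

lemma stype_image_act: "g \<in> carrier G \<Longrightarrow> s \<subseteq> \<Union>X \<Longrightarrow> stype vtype (act g ` s) = stype vtype s"
  unfolding stype_def using vtype_act by force

lemma image_act_in_orbit: "g \<in> carrier G \<Longrightarrow> act g ` s \<in> orbit G act s"
  unfolding mem_orbit_iff by blast

lemma self_in_orbit: "s \<subseteq> \<Union>X \<Longrightarrow> s \<in> orbit G act s"
  using image_act_in_orbit[OF one_closed] image_act_one by metis

lemma orbit_eq:
  assumes "s \<subseteq> \<Union>X" "a \<in> orbit G act s"
  shows "orbit G act a = orbit G act s"
proof -
  obtain g where g: "g \<in> carrier G" "a = act g ` s"
    using assms(2) unfolding mem_orbit_iff by blast
  show ?thesis
  proof
    show "orbit G act a \<subseteq> orbit G act s"
    proof
      fix b assume "b \<in> orbit G act a"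
      then obtain h where h: "h \<in> carrier G" "b = act h ` a" unfolding mem_orbit_iff by blast
      then have "b = act (h \<otimes> g) ` s" using g assms(1) by (simp add: image_act_mult)
      then show "b \<in> orbit G act s" using h(1) g(1) image_act_in_orbit by simp
    qed
    show "orbit G act s \<subseteq> orbit G act a"
    proof
      fix b assume "b \<in> orbit G act s"
      then obtain h where h: "h \<in> carrier G" "b = act h ` s" unfolding mem_orbit_iff by blast
      then have "b = act (h \<otimes> inv g) ` a"
        using g assms(1) image_act_subset by (simp add: image_act_mult image_act_inv)
      then show "b \<in> orbit G act a" using h(1) g(1) image_act_in_orbit by simp
    qed
  qed
qed

lemma stab_subgroup:
  assumes "s \<subseteq> \<Union>X"
  shows "subgroup (stab G act s) G"
proof (rule subgroupI)
  show "stab G act s \<subseteq> carrier G" "stab G act s \<noteq> {}"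
    using image_act_one[OF assms] by (auto simp: stab_def)
  show "inv h \<in> stab G act s" if "h \<in> stab G act s" for h
  proof -
    have "h \<in> carrier G" "act h ` s = s" using that by (auto simp: stab_def)
    then show ?thesis using image_act_inv[OF _ assms, of h] by (simp add: stab_def)
  qed
  show "h \<otimes> k \<in> stab G act s" if "h \<in> stab G act s" "k \<in> stab G act s" for h k
    using that image_act_mult[OF _ _ assms] by (auto simp: stab_def)
qed

lemma image_act_fixed_iff:
  assumes "g \<in> carrier G" "h \<in> carrier G" "s \<subseteq> \<Union>X"
  shows "act h ` act g ` s = act g ` s \<longleftrightarrow> act (inv g \<otimes> h \<otimes> g) ` s = s"
proof -
  have gs: "act g ` s \<subseteq> \<Union>X" using assms(1,3) by (rule image_act_subset)
  have conj: "act (inv g \<otimes> h \<otimes> g) ` s = act (inv g) ` act h ` act g ` s"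
    using assms gs by (simp add: image_act_mult)
  show ?thesis
  proof
    assume "act h ` act g ` s = act g ` s"
    then show "act (inv g \<otimes> h \<otimes> g) ` s = s"
      using conj image_act_inv[OF assms(1,3)] by simp
  next
    assume "act (inv g \<otimes> h \<otimes> g) ` s = s"
    then have "act g ` act (inv g) ` act h ` act g ` s = act g ` s" using conj by simp
    then show "act h ` act g ` s = act g ` s"
      using image_act_inv'[OF assms(1) image_act_subset[OF assms(2) gs]] by simp
  qed
qed

lemma stab_image_act:
  assumes "g \<in> carrier G" "s \<subseteq> \<Union>X"
  shows "stab G act (act g ` s) = (\<lambda>x. g \<otimes> x) ` (\<lambda>x. x \<otimes> inv g) ` stab G act s"
proof
  show "stab G act (act g ` s) \<subseteq> (\<lambda>x. g \<otimes> x) ` (\<lambda>x. x \<otimes> inv g) ` stab G act s"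
  proof
    fix h assume h: "h \<in> stab G act (act g ` s)"
    then have hc: "h \<in> carrier G" by (simp add: stab_def)
    then have "inv g \<otimes> h \<otimes> g \<in> stab G act s"
      using h assms image_act_fixed_iff by (simp add: stab_def)
    moreover have "h = g \<otimes> (inv g \<otimes> h \<otimes> g \<otimes> inv g)"
      using hc assms(1) by (simp add: m_assoc)
    ultimately show "h \<in> (\<lambda>x. g \<otimes> x) ` (\<lambda>x. x \<otimes> inv g) ` stab G act s" by blast
  qed
  show "(\<lambda>x. g \<otimes> x) ` (\<lambda>x. x \<otimes> inv g) ` stab G act s \<subseteq> stab G act (act g ` s)"
  proof clarify
    fix k assume k: "k \<in> stab G act s"
    then have kc: "k \<in> carrier G" by (simp add: stab_def)
    then have "inv g \<otimes> (g \<otimes> (k \<otimes> inv g)) \<otimes> g = k"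
      using assms(1) by (simp add: m_assoc)
    then show "g \<otimes> (k \<otimes> inv g) \<in> stab G act (act g ` s)"
      using k kc assms image_act_fixed_iff[of g "g \<otimes> (k \<otimes> inv g)"] by (simp add: stab_def)
  qed
qed

lemma stab_fibre:
  assumes "subgroup H G" "stab G act s \<subseteq> H" "h0 \<in> H" "s \<subseteq> \<Union>X"
  shows "{h \<in> H. act h ` s = act h0 ` s} = (\<lambda>x. h0 \<otimes> x) ` stab G act s"
proof (intro equalityI subsetI)
  have h0: "h0 \<in> carrier G" using subgroup.mem_carrier[OF assms(1,3)] .
  fix h assume "h \<in> {h \<in> H. act h ` s = act h0 ` s}"
  then have h: "h \<in> carrier G" "act h ` s = act h0 ` s"
    using subgroup.mem_carrier[OF assms(1)] by auto
  have "act (inv h0 \<otimes> h) ` s = act (inv h0) ` act h0 ` s"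
    using h h0 assms(4) by (simp add: image_act_mult)
  also have "\<dots> = s" using h0 assms(4) by (rule image_act_inv)
  finally have "inv h0 \<otimes> h \<in> stab G act s" using h0 h(1) by (simp add: stab_def)
  moreover have "h = h0 \<otimes> (inv h0 \<otimes> h)" using h0 h(1) by simp
  ultimately show "h \<in> (\<lambda>x. h0 \<otimes> x) ` stab G act s" by (rule rev_image_eqI)
next
  have h0: "h0 \<in> carrier G" using subgroup.mem_carrier[OF assms(1,3)] .
  fix h assume "h \<in> (\<lambda>x. h0 \<otimes> x) ` stab G act s"
  then obtain l where l: "l \<in> stab G act s" "h = h0 \<otimes> l" by blast
  then have "l \<in> carrier G" "act l ` s = s" by (auto simp: stab_def)
  then have "act h ` s = act h0 ` s" using l(2) h0 assms(4) by (simp add: image_act_mult)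
  moreover have "h \<in> H" using l assms(2) subgroup.m_closed[OF assms(1) assms(3)] by blast
  ultimately show "h \<in> {h \<in> H. act h ` s = act h0 ` s}" by blast
qed

definition orbit_rep :: "'v set set \<Rightarrow> 'v set \<Rightarrow> 'v set" where
  "orbit_rep D s = (SOME \<rho>. \<rho> \<in> D \<and> s \<in> orbit G act \<rho>)"

lemma orbit_rep:
  assumes "orbit_representatives G act Y D" "s \<in> Y"
  shows "orbit_rep D s \<in> D" "s \<in> orbit G act (orbit_rep D s)"
proof -
  have "\<exists>\<rho>. \<rho> \<in> D \<and> s \<in> orbit G act \<rho>"
    using assms unfolding orbit_representatives_def by blast
  then have "orbit_rep D s \<in> D \<and> s \<in> orbit G act (orbit_rep D s)"
    unfolding orbit_rep_def by (rule someI_ex)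
  then show "orbit_rep D s \<in> D" "s \<in> orbit G act (orbit_rep D s)" by auto
qed

lemma orbit_representatives_subset:
  "orbit_representatives G act Y D \<Longrightarrow> Y \<subseteq> X \<Longrightarrow> \<rho> \<in> D \<Longrightarrow> \<rho> \<subseteq> \<Union>X"
  unfolding orbit_representatives_def by blast

lemma orbit_representatives_unique:
  assumes "orbit_representatives G act Y D" "Y \<subseteq> X"
    and "\<rho> \<in> D" "\<rho>' \<in> D" "s \<in> orbit G act \<rho>" "s \<in> orbit G act \<rho>'"
  shows "\<rho> = \<rho>'"
proof -
  have "orbit G act \<rho> = orbit G act \<rho>'"
    using orbit_eq[OF _ assms(5)] orbit_eq[OF _ assms(6)]
      orbit_representatives_subset[OF assms(1,2)] assms(3,4) by simp
  then have "\<rho>' \<in> orbit G act \<rho>"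
    using self_in_orbit orbit_representatives_subset[OF assms(1,2,4)] by simp
  then show ?thesis using assms(1,3,4) unfolding orbit_representatives_def by blast
qed

lemma orbit_rep_eq_iff:
  assumes "orbit_representatives G act Y D" "Y \<subseteq> X" "a \<in> Y" "b \<in> Y"
  shows "orbit_rep D a = orbit_rep D b \<longleftrightarrow> b \<in> orbit G act a"
proof -
  have orbit_rep_orbit: "orbit G act (orbit_rep D c) = orbit G act c" if "c \<in> Y" for c
    using orbit_eq orbit_rep[OF assms(1) that]
      orbit_representatives_subset[OF assms(1,2)] by metis
  show ?thesis
  proof
    assume "orbit_rep D a = orbit_rep D b"
    then show "b \<in> orbit G act a"
      using orbit_rep_orbit assms(3,4) orbit_rep(2)[OF assms(1,4)] by metis
  next
    assume "b \<in> orbit G act a"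
    then have "b \<in> orbit G act (orbit_rep D a)" using orbit_rep_orbit[OF assms(3)] by simp
    then show "orbit_rep D a = orbit_rep D b"
      using orbit_representatives_unique[OF assms(1,2)] orbit_rep[OF assms(1)] assms(3,4)
      by blast
  qed
qed

lemma orbit_rep_image_act:
  assumes "orbit_representatives G act Y D" "Y \<subseteq> X" "s \<in> Y" "g \<in> carrier G" "act g ` s \<in> Y"
  shows "orbit_rep D (act g ` s) = orbit_rep D s"
  using orbit_rep_eq_iff[OF assms(1,2,3,5)] image_act_in_orbit[OF assms(4)] by simp

lemma orbit_rep_self:
  assumes "orbit_representatives G act Y D" "Y \<subseteq> X" "\<rho> \<in> D"
  shows "orbit_rep D \<rho> = \<rho>"
proof -
  have "\<rho> \<in> Y" using assms(1,3) unfolding orbit_representatives_def by blast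
  then show ?thesis
    using orbit_rep[OF assms(1)] orbit_representatives_unique[OF assms(1,2) _ assms(3)]
      self_in_orbit[OF orbit_representatives_subset[OF assms]] by blast
qed

lemma orbit_representatives_finite:
  assumes "cocompact_action G act X" "orbit_representatives G act Y D" "Y \<subseteq> X"
  shows "finite D"
proof -
  have "inj_on (orbit G act) D"
  proof (rule inj_onI)
    fix \<rho> \<rho>' assume "\<rho> \<in> D" "\<rho>' \<in> D" "orbit G act \<rho> = orbit G act \<rho>'"
    then show "\<rho> = \<rho>'"
      using orbit_representatives_unique[OF assms(2,3)] self_in_orbit
        orbit_representatives_subset[OF assms(2,3)] by metis
  qed
  moreover have "orbit G act ` D \<subseteq> orbit G act ` X"
    using assms(2,3) unfolding orbit_representatives_def by blast
  then have "finite (orbit G act ` D)"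
    using assms(1) unfolding cocompact_action_def by (rule finite_subset)
  ultimately show ?thesis by (rule finite_imageD[rotated])
qed

end

locale haar_simplicial_action = simplicial_group_action G act X vtype
  for G :: "'g monoid" (structure) and act :: "'g \<Rightarrow> 'v \<Rightarrow> 'v" and X :: "'v set set"
    and vtype :: "'v \<Rightarrow> nat" +
  fixes T :: "'g topology" and \<mu> :: "'g measure"
  assumes topological_group: "topological_group G T"
    and unimodular: "unimodular_haar G T \<mu>"
begin

definition weight :: "'v set \<Rightarrow> real" where
  "weight s = measure \<mu> (stab G act s)"

lemma left_haar: "left_haar_measure G T \<mu>"
  using unimodular by (simp add: unimodular_haar_def)

lemma weight_pos:
  assumes "s \<subseteq> \<Union>X" "openin T (stab G act s)" "compactin T (stab G act s)"
  shows "weight s > 0"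
  unfolding weight_def using left_haar assms(2,3) subgroup.one_closed[OF stab_subgroup[OF assms(1)]]
  by (intro left_haar_measure_open_compact_pos) auto

lemma weight_image_act:
  assumes "g \<in> carrier G" "s \<subseteq> \<Union>X" "openin T (stab G act s)"
  shows "weight (act g ` s) = weight s"
  unfolding weight_def measure_def stab_image_act[OF assms(1,2)]
  using unimodular_haar_conjugation_invariant[OF topological_group unimodular assms(1,3)] by simp

lemma weight_orbit_index:
  assumes "s \<subseteq> \<Union>X" "t \<subseteq> \<Union>X" "stab G act s \<subseteq> stab G act t"
    and "openin T (stab G act s)" "compactin T (stab G act s)"
    and "finite ((\<lambda>h. act h ` s) ` stab G act t)"
  shows "real (card ((\<lambda>h. act h ` s) ` stab G act t)) * weight s = weight t"
proof -
  let ?O = "(\<lambda>h. act h ` s) ` stab G act t"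
  let ?C = "\<lambda>s'. {h \<in> stab G act t. act h ` s = s'}"
  have "stab G act t = (\<Union>s'\<in>?O. ?C s')" by blast
  then have "weight t = measure \<mu> (\<Union>s'\<in>?O. ?C s')" by (simp add: weight_def)
  also have "\<dots> = real (card ?O) * weight s"
    unfolding weight_def
  proof (rule left_haar_measure_disjoint_translates[OF topological_group left_haar assms(6) _ _ assms(4,5)])
    show "disjoint_family_on ?C ?O" by (auto simp: disjoint_family_on_def)
    fix s' assume "s' \<in> ?O"
    then obtain h0 where "h0 \<in> stab G act t" "s' = act h0 ` s" by blast
    then show "\<exists>h\<in>carrier G. ?C s' = (\<lambda>x. h \<otimes> x) ` stab G act s"
      using stab_fibre[OF stab_subgroup[OF assms(2)] assms(3) _ assms(1)] by (auto simp: stab_def)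
  qed
  finally show ?thesis by simp
qed

end

section \<open>Norm estimates\<close>

lemma real_sqrt_le_self: "1 \<le> (c::real) \<Longrightarrow> sqrt c \<le> c"
proof -
  assume c: "1 \<le> c"
  then have "sqrt c * 1 \<le> sqrt c * sqrt c" by (intro mult_left_mono) auto
  then show "sqrt c \<le> c" using c by simp
qed

lemma one_le_norm_id_blinfun:
  fixes x :: "'a::real_normed_vector"
  assumes "x \<noteq> 0"
  shows "1 \<le> norm (id_blinfun :: 'a \<Rightarrow>\<^sub>L 'a)"
  using norm_blinfun[of id_blinfun x] assms by simp

lemma op_norm_on_le:
  assumes "\<And>\<phi>. \<phi> \<in> C \<Longrightarrow> N (P \<phi>) \<le> c * N \<phi>" "\<And>\<phi>. \<phi> \<in> C \<Longrightarrow> 0 \<le> N \<phi>"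
  shows "op_norm_on C N P \<le> ereal c"
  unfolding op_norm_on_def
proof (rule SUP_least)
  fix \<phi> assume \<phi>: "\<phi> \<in> {\<phi> \<in> C. N \<phi> \<noteq> 0}"
  then have "0 < N \<phi>" using assms(2) by force
  then show "ereal (N (P \<phi>) / N \<phi>) \<le> ereal c" using assms(1) \<phi> by (simp add: divide_le_eq)
qed

lemma cnorm_nonneg: "0 \<le> cnorm \<mu> G act D \<phi>"
  unfolding cnorm_def by (intro real_sqrt_ge_zero sum_nonneg divide_nonneg_nonneg) auto

lemma le_SUP_ereal_if_bounds:
  fixes x :: ereal and f :: "'a \<Rightarrow> real"
  assumes "\<And>c. (\<And>g. g \<in> K \<Longrightarrow> f g \<le> c) \<Longrightarrow> x \<le> ereal c"
  shows "x \<le> (SUP g\<in>K. ereal (f g))"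
proof (cases "SUP g\<in>K. ereal (f g)")
  case (real s)
  then have "f g \<le> s" if "g \<in> K" for g
    using SUP_upper[OF that, of "\<lambda>g. ereal (f g)"] by simp
  then show ?thesis using assms real by simp
next
  case PInf
  then show ?thesis by simp
next
  case MInf
  then have "K = {}" using SUP_upper[of _ K "\<lambda>g. ereal (f g)"] by force
  then have "x = -\<infinity>" using assms by (intro ereal_bot) simp
  then show ?thesis by simp
qed

lemma norm_average_sq_le:
  fixes f :: "'a \<Rightarrow> 'b::real_normed_vector"
  assumes "finite A" "A \<noteq> {}"
  shows "(norm ((1 / real (card A)) *\<^sub>R (\<Sum>x\<in>A. f x)))\<^sup>2 \<le> (\<Sum>x\<in>A. (norm (f x))\<^sup>2) / real (card A)"
proof -
  let ?k = "real (card A)"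
  have k: "?k > 0" using assms by (simp add: card_gt_0_iff)
  have "norm ((1 / ?k) *\<^sub>R (\<Sum>x\<in>A. f x)) \<le> (\<Sum>x\<in>A. norm (f x)) / ?k"
    using k norm_sum[of f A] by (simp add: divide_right_mono)
  then have "(norm ((1 / ?k) *\<^sub>R (\<Sum>x\<in>A. f x)))\<^sup>2 \<le> ((\<Sum>x\<in>A. norm (f x)) / ?k)\<^sup>2"
    by (rule power_mono) simp
  also have "\<dots> \<le> (\<Sum>x\<in>A. (norm (f x))\<^sup>2) * ?k / ?k\<^sup>2"
    unfolding power_divide using sum_squared_le_sum_of_squares[of "\<lambda>x. norm (f x)" A]
    by (simp add: divide_right_mono)
  also have "\<dots> = (\<Sum>x\<in>A. (norm (f x))\<^sup>2) / ?k"
    using k by (simp add: power2_eq_square)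
  finally show ?thesis .
qed

section \<open>Averaging over the chambers at a panel\<close>

locale panel_averaging = haar_simplicial_action G act X vtype T \<mu>
  for G :: "'g monoid" (structure) and act :: "'g \<Rightarrow> 'v \<Rightarrow> 'v" and X :: "'v set set"
    and vtype :: "'v \<Rightarrow> nat" and T :: "'g topology" and \<mu> :: "'g measure" +
  fixes n :: nat and \<nu> :: "nat set" and Dn1 Dn :: "'v set set"
  assumes n_pos: "n \<ge> 1"
    and pure: "pure_dim X n"
    and part: "partite X n vtype"
    and finite_links: "\<forall>\<tau>\<in>cfaces X (n - 1). finite {v. {v} \<in> link X \<tau>}"
    and cocompact: "cocompact_action G act X"
    and stab_open_compact: "\<forall>\<tau>\<in>cfaces X n \<union> cfaces X (n + 1).
        openin T (stab G act \<tau>) \<and> compactin T (stab G act \<tau>)"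
    and D1: "orbit_representatives G act (cfaces X n) Dn1"
    and D0: "orbit_representatives G act (cfaces X (n + 1)) Dn"
    and nu: "\<nu> \<subseteq> {0..n}" "card \<nu> = n"
begin

abbreviation chambers :: "'v set set" where
  "chambers \<equiv> cfaces X (n + 1)"

definition panel :: "'v set \<Rightarrow> 'v set" where
  "panel \<sigma> = {v \<in> \<sigma>. vtype v \<in> \<nu>}"

definition chambers_at :: "'v set \<Rightarrow> 'v set set" where
  "chambers_at t = {\<sigma> \<in> chambers. panel \<sigma> = t}"

definition panel_reps :: "'v set set" where
  "panel_reps = {t \<in> Dn1. stype vtype t = \<nu>}"

lemma vtype_le: "v \<in> \<Union>X \<Longrightarrow> vtype v \<le> n"
  using part unfolding partite_def by (elim conjE) (rule bspec)

lemma chamber_type_ex1: "\<sigma> \<in> chambers \<Longrightarrow> i \<le> n \<Longrightarrow> \<exists>!v. v \<in> \<sigma> \<and> vtype v = i"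
  using part unfolding partite_def by (elim conjE) simp

lemma chamber_vertex_unique:
  assumes "\<sigma> \<in> chambers" "u \<in> \<sigma>" "v \<in> \<sigma>" "vtype u = vtype v"
  shows "u = v"
proof -
  have "vtype u \<le> n" using assms(1,2) cfaces_vertices vtype_le by blast
  then have "\<exists>!w. w \<in> \<sigma> \<and> vtype w = vtype u" by (rule chamber_type_ex1[OF assms(1)])
  then show ?thesis using assms(2-4) by (metis (mono_tags))
qed

lemma stab_chamber_open: "\<sigma> \<in> chambers \<Longrightarrow> openin T (stab G act \<sigma>)"
  and stab_chamber_compact: "\<sigma> \<in> chambers \<Longrightarrow> compactin T (stab G act \<sigma>)"
  using stab_open_compact by blast+

lemma weight_chamber_pos: "\<sigma> \<in> chambers \<Longrightarrow> weight \<sigma> > 0"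
  by (rule weight_pos[OF cfaces_vertices stab_chamber_open stab_chamber_compact])

lemma panel_subset: "panel \<sigma> \<subseteq> \<sigma>"
  unfolding panel_def by blast

lemma vtype_image_panel:
  assumes "\<sigma> \<in> chambers"
  shows "vtype ` panel \<sigma> = \<nu>"
proof
  show "vtype ` panel \<sigma> \<subseteq> \<nu>" unfolding panel_def by blast
  show "\<nu> \<subseteq> vtype ` panel \<sigma>"
  proof
    fix i assume i: "i \<in> \<nu>"
    then obtain v where "v \<in> \<sigma>" "vtype v = i"
      using chamber_type_ex1[OF assms] nu(1) by force
    then show "i \<in> vtype ` panel \<sigma>" using i unfolding panel_def by blast
  qed
qed

lemma panel_cfaces:
  assumes "\<sigma> \<in> chambers"
  shows "panel \<sigma> \<in> cfaces X n"
proof -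
  have "inj_on vtype (panel \<sigma>)"
    using chamber_vertex_unique[OF assms] panel_subset by (meson inj_onI subsetD)
  then have "card (panel \<sigma>) = n"
    using card_image vtype_image_panel[OF assms] nu(2) by fastforce
  moreover have "panel \<sigma> \<in> X"
    using simplex_subset[OF cfaces_simplex[OF assms] panel_subset] .
  ultimately show ?thesis unfolding cfaces_def by blast
qed

lemma panel_unique:
  assumes "\<sigma> \<in> chambers" "\<tau> \<subseteq> \<sigma>" "stype vtype \<tau> = \<nu>"
  shows "\<tau> = panel \<sigma>"
proof
  show "\<tau> \<subseteq> panel \<sigma>" using assms(2,3) unfolding panel_def stype_def by blast
  show "panel \<sigma> \<subseteq> \<tau>"
  proof
    fix v assume v: "v \<in> panel \<sigma>"
    then obtain u where "u \<in> \<tau>" "vtype u = vtype v"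
      using assms(3) unfolding panel_def stype_def by blast
    then show "v \<in> \<tau>"
      using chamber_vertex_unique[OF assms(1)] assms(2) v panel_subset by blast
  qed
qed

lemma nu_adj_iff_panel_eq:
  assumes "\<sigma> \<in> chambers" "\<sigma>' \<in> chambers"
  shows "nu_adj X vtype \<nu> \<sigma> \<sigma>' \<longleftrightarrow> panel \<sigma> = panel \<sigma>'"
proof
  assume "nu_adj X vtype \<nu> \<sigma> \<sigma>'"
  then obtain \<tau> where "\<tau> \<subseteq> \<sigma>" "\<tau> \<subseteq> \<sigma>'" "stype vtype \<tau> = \<nu>"
    unfolding nu_adj_def by blast
  then show "panel \<sigma> = panel \<sigma>'" using panel_unique assms by metis
next
  assume "panel \<sigma> = panel \<sigma>'"
  moreover have "stype vtype (panel \<sigma>) = \<nu>"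
    using vtype_image_panel[OF assms(1)] by (simp add: stype_eq_image)
  ultimately show "nu_adj X vtype \<nu> \<sigma> \<sigma>'"
    unfolding nu_adj_def using panel_cfaces[OF assms(1)] panel_subset cfaces_subset
    by (metis Int_greatest subsetD)
qed

lemma panel_image_act:
  assumes "g \<in> carrier G" "\<sigma> \<subseteq> \<Union>X"
  shows "panel (act g ` \<sigma>) = act g ` panel \<sigma>"
  using vtype_act assms unfolding panel_def by force

lemma stab_chamber_subset_stab_panel:
  assumes "\<sigma> \<subseteq> \<Union>X"
  shows "stab G act \<sigma> \<subseteq> stab G act (panel \<sigma>)"
proof
  fix h assume "h \<in> stab G act \<sigma>"
  then have h: "h \<in> carrier G" "act h ` \<sigma> = \<sigma>" by (auto simp: stab_def)
  have "act h ` panel \<sigma> = panel (act h ` \<sigma>)" using panel_image_act[OF h(1) assms] by (rule sym)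
  also have "\<dots> = panel \<sigma>" by (simp only: h(2))
  finally show "h \<in> stab G act (panel \<sigma>)" using h(1) by (simp add: stab_def)
qed

lemma chambers_at_image_act:
  assumes "g \<in> carrier G" "t \<subseteq> \<Union>X"
  shows "chambers_at (act g ` t) = (`) (act g) ` chambers_at t"
proof
  show "(`) (act g) ` chambers_at t \<subseteq> chambers_at (act g ` t)"
    using assms(1) image_act_cfaces panel_image_act cfaces_vertices
    by (auto simp: chambers_at_def)
  show "chambers_at (act g ` t) \<subseteq> (`) (act g) ` chambers_at t"
  proof
    fix \<sigma> assume "\<sigma> \<in> chambers_at (act g ` t)"
    then have \<sigma>: "\<sigma> \<in> chambers" "panel \<sigma> = act g ` t" by (auto simp: chambers_at_def)
    have "act (inv g) ` \<sigma> \<in> chambers_at t"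
      using \<sigma> assms image_act_cfaces[OF inv_closed] panel_image_act[OF inv_closed]
        cfaces_vertices image_act_inv by (simp add: chambers_at_def)
    moreover have "\<sigma> = act g ` act (inv g) ` \<sigma>"
      using image_act_inv'[OF assms(1) cfaces_vertices[OF \<sigma>(1)]] by simp
    ultimately show "\<sigma> \<in> (`) (act g) ` chambers_at t" by blast
  qed
qed

lemma finite_chambers_at:
  assumes "\<sigma> \<in> chambers"
  shows "finite (chambers_at (panel \<sigma>))"
proof -
  let ?t = "panel \<sigma>"
  have t: "?t \<in> cfaces X n" using panel_cfaces[OF assms] .
  then obtain x where x: "x \<in> ?t" using n_pos by (fastforce simp: cfaces_def)
  let ?\<rho> = "?t - {x}"
  have t_fin: "finite ?t" using simplex_finite cfaces_simplex[OF t] by blast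
  have "?\<rho> \<in> cfaces X (n - 1)"
    using t x t_fin simplex_subset[OF cfaces_simplex[OF t]] by (auto simp: cfaces_def)
  then have link_fin: "finite {v. {v} \<in> link X ?\<rho>}" using finite_links by blast
  have "chambers_at ?t \<subseteq> (\<lambda>v. insert v ?t) ` {v. {v} \<in> link X ?\<rho>}"
  proof
    fix s assume "s \<in> chambers_at ?t"
    then have s: "s \<in> chambers" "panel s = ?t" by (auto simp: chambers_at_def)
    then have "?t \<subseteq> s" "finite s" using panel_subset simplex_finite cfaces_simplex by metis+
    then have "card (s - ?t) = 1"
      using cfaces_card[OF s(1)] cfaces_card[OF t] t_fin by (simp add: card_Diff_subset)
    then obtain v where v: "s - ?t = {v}" by (rule card_1_singletonE)
    have "{v} \<subseteq> s" "{v} \<union> ?\<rho> \<subseteq> s" "{v} \<inter> ?\<rho> = {}" using v \<open>?t \<subseteq> s\<close> by auto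
    then have "{v} \<in> link X ?\<rho>"
      using simplex_subset[OF cfaces_simplex[OF s(1)]] unfolding link_def by simp
    moreover have "s = insert v ?t" using v \<open>?t \<subseteq> s\<close> by blast
    ultimately show "s \<in> (\<lambda>v. insert v ?t) ` {v. {v} \<in> link X ?\<rho>}" by blast
  qed
  then show ?thesis using link_fin finite_subset by blast
qed

lemma P_op_eq:
  assumes "\<sigma> \<in> chambers"
  shows "P_op X n vtype \<nu> \<phi> \<sigma>
    = (1 / real (card (chambers_at (panel \<sigma>)))) *\<^sub>R (\<Sum>\<sigma>'\<in>chambers_at (panel \<sigma>). \<phi> \<sigma>')"
proof -
  have "{\<sigma>' \<in> chambers. nu_adj X vtype \<nu> \<sigma> \<sigma>'} = chambers_at (panel \<sigma>)"
    using nu_adj_iff_panel_eq[OF assms] by (auto simp: chambers_at_def)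
  then show ?thesis using assms by (simp add: P_op_def Let_def)
qed

lemma panel_reps_cfaces: "t \<in> panel_reps \<Longrightarrow> t \<in> cfaces X n"
  using D1 unfolding panel_reps_def orbit_representatives_def by blast

lemma finite_panel_reps: "finite panel_reps"
  using orbit_representatives_finite[OF cocompact D1 cfaces_subset]
  by (simp add: panel_reps_def)

lemma weight_panel_rep_pos: "t \<in> panel_reps \<Longrightarrow> weight t > 0"
  using stab_open_compact panel_reps_cfaces weight_pos[OF cfaces_vertices] by blast

lemma panel_rep_chambers_at:
  assumes "t \<in> panel_reps"
  shows "finite (chambers_at t)" "chambers_at t \<noteq> {}"
proof -
  have t: "t \<in> X" "stype vtype t = \<nu>"
    using assms panel_reps_cfaces cfaces_simplex by (auto simp: panel_reps_def)
  then obtain \<sigma> where \<sigma>: "\<sigma> \<in> chambers" "t \<subseteq> \<sigma>"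
    using pure unfolding pure_dim_def by blast
  then have "t = panel \<sigma>" using panel_unique t(2) by blast
  then show "finite (chambers_at t)" "chambers_at t \<noteq> {}"
    using finite_chambers_at[OF \<sigma>(1)] \<sigma>(1) by (auto simp: chambers_at_def)
qed

lemma chamber_moves_to_panel_rep:
  assumes "\<sigma> \<in> chambers"
  obtains g where "g \<in> carrier G" "panel (act g ` \<sigma>) \<in> panel_reps"
proof -
  obtain t where t: "t \<in> Dn1" "panel \<sigma> \<in> orbit G act t"
    using D1 panel_cfaces[OF assms] unfolding orbit_representatives_def by blast
  then obtain k where k: "k \<in> carrier G" "panel \<sigma> = act k ` t" by (auto simp: mem_orbit_iff)
  have t_sub: "t \<subseteq> \<Union>X" using orbit_representatives_subset[OF D1 cfaces_subset t(1)] .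
  have "panel (act (inv k) ` \<sigma>) = t"
    using panel_image_act[OF inv_closed[OF k(1)] cfaces_vertices[OF assms]] k(2)
      image_act_inv[OF k(1) t_sub] by simp
  moreover have "stype vtype t = \<nu>"
    using stype_image_act[OF k(1) t_sub] k(2) vtype_image_panel[OF assms]
    by (simp add: stype_eq_image)
  ultimately show thesis using that[OF inv_closed[OF k(1)]] t(1) by (simp add: panel_reps_def)
qed

lemma orbit_rep_fibre:
  assumes "\<sigma>1 \<in> chambers" "panel \<sigma>1 \<in> panel_reps"
  shows "{\<sigma> \<in> chambers. panel \<sigma> \<in> panel_reps \<and> orbit_rep Dn \<sigma> = orbit_rep Dn \<sigma>1}
    = (\<lambda>h. act h ` \<sigma>1) ` stab G act (panel \<sigma>1)"
proof (intro equalityI subsetI)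
  fix \<sigma> assume "\<sigma> \<in> {\<sigma> \<in> chambers. panel \<sigma> \<in> panel_reps \<and> orbit_rep Dn \<sigma> = orbit_rep Dn \<sigma>1}"
  then have \<sigma>: "\<sigma> \<in> chambers" "panel \<sigma> \<in> panel_reps" "orbit_rep Dn \<sigma> = orbit_rep Dn \<sigma>1"
    by auto
  then have "\<sigma> \<in> orbit G act \<sigma>1"
    using orbit_rep_eq_iff[OF D0 cfaces_subset assms(1) \<sigma>(1)] by simp
  then obtain k where k: "k \<in> carrier G" "\<sigma> = act k ` \<sigma>1" by (auto simp: mem_orbit_iff)
  then have k_panel: "panel \<sigma> = act k ` panel \<sigma>1"
    using panel_image_act[OF k(1) cfaces_vertices[OF assms(1)]] by simp
  have "panel \<sigma> \<in> orbit G act (panel \<sigma>1)" using k_panel image_act_in_orbit[OF k(1)] by simp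
  moreover have "panel \<sigma> \<in> orbit G act (panel \<sigma>)"
    using self_in_orbit cfaces_vertices[OF panel_cfaces[OF \<sigma>(1)]] .
  ultimately have "panel \<sigma>1 = panel \<sigma>"
    using orbit_representatives_unique[OF D1 cfaces_subset] \<sigma>(2) assms(2)
    unfolding panel_reps_def by blast
  then have "k \<in> stab G act (panel \<sigma>1)" using k(1) k_panel by (simp add: stab_def)
  then show "\<sigma> \<in> (\<lambda>h. act h ` \<sigma>1) ` stab G act (panel \<sigma>1)" using k(2) by blast
next
  fix \<sigma> assume "\<sigma> \<in> (\<lambda>h. act h ` \<sigma>1) ` stab G act (panel \<sigma>1)"
  then obtain h where h: "h \<in> carrier G" "act h ` panel \<sigma>1 = panel \<sigma>1" "\<sigma> = act h ` \<sigma>1"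
    by (auto simp: stab_def)
  have "\<sigma> \<in> chambers" using image_act_cfaces[OF h(1) assms(1)] h(3) by simp
  moreover have "panel \<sigma> = panel \<sigma>1"
    using panel_image_act[OF h(1) cfaces_vertices[OF assms(1)]] h(2,3) by simp
  moreover have "orbit_rep Dn \<sigma> = orbit_rep Dn \<sigma>1"
    using orbit_rep_image_act[OF D0 cfaces_subset assms(1) h(1)] image_act_cfaces[OF h(1) assms(1)]
      h(3) by simp
  ultimately show "\<sigma> \<in> {\<sigma> \<in> chambers. panel \<sigma> \<in> panel_reps \<and> orbit_rep Dn \<sigma> = orbit_rep Dn \<sigma>1}"
    using assms(2) by simp
qed

lemma sum_orbit_rep_fibre:
  fixes F :: "'v set \<Rightarrow> real"
  assumes F: "\<And>g \<sigma>. g \<in> carrier G \<Longrightarrow> \<sigma> \<in> chambers \<Longrightarrow> F (act g ` \<sigma>) = F \<sigma>"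
    and "\<rho> \<in> Dn"
  shows "(\<Sum>\<sigma>\<in>{\<sigma> \<in> chambers. panel \<sigma> \<in> panel_reps \<and> orbit_rep Dn \<sigma> = \<rho>}. F \<sigma> / weight (panel \<sigma>))
    = F \<rho> / weight \<rho>"
proof -
  have \<rho>: "\<rho> \<in> chambers" using D0 assms(2) unfolding orbit_representatives_def by blast
  obtain g where g: "g \<in> carrier G" "panel (act g ` \<rho>) \<in> panel_reps"
    using chamber_moves_to_panel_rep[OF \<rho>] .
  define \<sigma>1 where "\<sigma>1 = act g ` \<rho>"
  define orb where "orb = (\<lambda>h. act h ` \<sigma>1) ` stab G act (panel \<sigma>1)"
  have \<sigma>1: "\<sigma>1 \<in> chambers" "panel \<sigma>1 \<in> panel_reps" "\<sigma>1 \<subseteq> \<Union>X"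
    using g image_act_cfaces[OF g(1) \<rho>] cfaces_vertices by (auto simp: \<sigma>1_def)
  have "orbit_rep Dn \<sigma>1 = \<rho>"
    using orbit_rep_image_act[OF D0 cfaces_subset \<rho> g(1)] \<sigma>1(1)
      orbit_rep_self[OF D0 cfaces_subset assms(2)] by (simp add: \<sigma>1_def)
  then have fibre: "{\<sigma> \<in> chambers. panel \<sigma> \<in> panel_reps \<and> orbit_rep Dn \<sigma> = \<rho>} = orb"
    using orbit_rep_fibre[OF \<sigma>1(1,2)] by (simp add: orb_def)
  have orb_mem: "\<sigma> \<in> chambers \<and> panel \<sigma> = panel \<sigma>1 \<and> F \<sigma> = F \<rho>" if \<sigma>: "\<sigma> \<in> orb" for \<sigma>
  proof -
    obtain h where h: "h \<in> carrier G" "act h ` panel \<sigma>1 = panel \<sigma>1" "\<sigma> = act h ` \<sigma>1"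
      using \<sigma> by (auto simp: orb_def stab_def)
    then show ?thesis
      using image_act_cfaces[OF h(1) \<sigma>1(1)] panel_image_act[OF h(1) \<sigma>1(3)] F[OF h(1) \<sigma>1(1)]
        F[OF g(1) \<rho>] by (simp add: \<sigma>1_def)
  qed
  then have "orb \<subseteq> chambers_at (panel \<sigma>1)" by (auto simp: chambers_at_def)
  then have "finite orb" using finite_chambers_at[OF \<sigma>1(1)] finite_subset by blast
  then have index: "real (card orb) * weight \<sigma>1 = weight (panel \<sigma>1)"
    unfolding orb_def
    by (intro weight_orbit_index \<sigma>1(3) cfaces_vertices[OF panel_cfaces[OF \<sigma>1(1)]]
        stab_chamber_subset_stab_panel stab_chamber_open stab_chamber_compact \<sigma>1(1))
  have "weight \<sigma>1 = weight \<rho>"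
    unfolding \<sigma>1_def by (rule weight_image_act[OF g(1) cfaces_vertices[OF \<rho>] stab_chamber_open[OF \<rho>]])
  with index have index': "weight (panel \<sigma>1) = real (card orb) * weight \<rho>" by simp
  have "real (card orb) > 0"
    using index' weight_panel_rep_pos[OF \<sigma>1(2)] by (simp add: zero_less_mult_iff)
  have "(\<Sum>\<sigma>\<in>{\<sigma> \<in> chambers. panel \<sigma> \<in> panel_reps \<and> orbit_rep Dn \<sigma> = \<rho>}. F \<sigma> / weight (panel \<sigma>))
      = real (card orb) * (F \<rho> / weight (panel \<sigma>1))"
    unfolding fibre using orb_mem by simp
  also have "\<dots> = F \<rho> / weight \<rho>"
    unfolding index' using \<open>real (card orb) > 0\<close> by simp
  finally show ?thesis .
qed

text \<open>Both sides equal the sum of \<open>F \<sigma> / weight (panel \<sigma>)\<close> over the chambers whose panel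
  is a representative: grouped by panel on the right, and by orbit on the left, where each
  fibre contributes \<open>F \<rho> / weight \<rho>\<close> by \<open>sum_orbit_rep_fibre\<close>.\<close>

lemma sum_chambers_by_panels:
  fixes F :: "'v set \<Rightarrow> real"
  assumes F: "\<And>g \<sigma>. g \<in> carrier G \<Longrightarrow> \<sigma> \<in> chambers \<Longrightarrow> F (act g ` \<sigma>) = F \<sigma>"
  shows "(\<Sum>\<sigma>\<in>Dn. F \<sigma> / weight \<sigma>) = (\<Sum>t\<in>panel_reps. (\<Sum>\<sigma>\<in>chambers_at t. F \<sigma>) / weight t)"
proof -
  define S where "S = {\<sigma> \<in> chambers. panel \<sigma> \<in> panel_reps}"
  have "S = (\<Union>t\<in>panel_reps. chambers_at t)" by (auto simp: S_def chambers_at_def)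
  then have S_fin: "finite S" using finite_panel_reps panel_rep_chambers_at(1) by auto
  have Dn_fin: "finite Dn" using orbit_representatives_finite[OF cocompact D0 cfaces_subset] .
  have "(\<Sum>t\<in>panel_reps. (\<Sum>\<sigma>\<in>chambers_at t. F \<sigma>) / weight t)
      = (\<Sum>t\<in>panel_reps. \<Sum>\<sigma>\<in>{\<sigma> \<in> S. panel \<sigma> = t}. F \<sigma> / weight (panel \<sigma>))"
    unfolding sum_divide_distrib by (intro sum.cong) (auto simp: S_def chambers_at_def)
  also have "\<dots> = (\<Sum>\<sigma>\<in>S. F \<sigma> / weight (panel \<sigma>))"
    using S_fin finite_panel_reps by (intro sum.group) (auto simp: S_def)
  also have "\<dots> = (\<Sum>\<rho>\<in>Dn. \<Sum>\<sigma>\<in>{\<sigma> \<in> S. orbit_rep Dn \<sigma> = \<rho>}. F \<sigma> / weight (panel \<sigma>))"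
    using S_fin Dn_fin orbit_rep(1)[OF D0] by (intro sum.group[symmetric]) (auto simp: S_def)
  also have "\<dots> = (\<Sum>\<rho>\<in>Dn. F \<rho> / weight \<rho>)"
    using sum_orbit_rep_fibre[OF F] by (intro sum.cong) (simp_all add: S_def conj_assoc)
  finally show ?thesis by simp
qed

definition panel_average :: "('v set \<Rightarrow> real) \<Rightarrow> 'v set \<Rightarrow> real" where
  "panel_average F \<sigma> = (\<Sum>\<sigma>'\<in>chambers_at (panel \<sigma>). F \<sigma>') / real (card (chambers_at (panel \<sigma>)))"

lemma panel_average_image_act:
  assumes F: "\<And>g \<sigma>. g \<in> carrier G \<Longrightarrow> \<sigma> \<in> chambers \<Longrightarrow> F (act g ` \<sigma>) = F \<sigma>"
    and g: "g \<in> carrier G" and \<sigma>: "\<sigma> \<in> chambers"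
  shows "panel_average F (act g ` \<sigma>) = panel_average F \<sigma>"
proof -
  let ?N = "chambers_at (panel \<sigma>)"
  have N: "chambers_at (panel (act g ` \<sigma>)) = (`) (act g) ` ?N"
    using panel_image_act[OF g cfaces_vertices[OF \<sigma>]]
      chambers_at_image_act[OF g order_trans[OF panel_subset cfaces_vertices[OF \<sigma>]]] by simp
  have inj: "inj_on ((`) (act g)) ?N"
    using inj_on_image_act[OF g] by (rule inj_on_subset) (auto simp: chambers_at_def cfaces_def)
  have "(\<Sum>\<sigma>'\<in>(`) (act g) ` ?N. F \<sigma>') = (\<Sum>\<sigma>'\<in>?N. F (act g ` \<sigma>'))"
    using sum.reindex[OF inj, of F] by (simp add: comp_def)
  also have "\<dots> = (\<Sum>\<sigma>'\<in>?N. F \<sigma>')"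
    using F[OF g] by (intro sum.cong) (auto simp: chambers_at_def)
  finally have "(\<Sum>\<sigma>'\<in>(`) (act g) ` ?N. F \<sigma>') = (\<Sum>\<sigma>'\<in>?N. F \<sigma>')" .
  then show ?thesis unfolding panel_average_def N card_image[OF inj] by simp
qed

lemma sum_panel_average:
  assumes F: "\<And>g \<sigma>. g \<in> carrier G \<Longrightarrow> \<sigma> \<in> chambers \<Longrightarrow> F (act g ` \<sigma>) = F \<sigma>"
  shows "(\<Sum>\<sigma>\<in>Dn. panel_average F \<sigma> / weight \<sigma>) = (\<Sum>\<sigma>\<in>Dn. F \<sigma> / weight \<sigma>)"
proof -
  have "(\<Sum>\<sigma>\<in>chambers_at t. panel_average F \<sigma>) = (\<Sum>\<sigma>\<in>chambers_at t. F \<sigma>)"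
    if t: "t \<in> panel_reps" for t
  proof -
    have "(\<Sum>\<sigma>\<in>chambers_at t. panel_average F \<sigma>)
        = (\<Sum>\<sigma>\<in>chambers_at t. (\<Sum>\<sigma>'\<in>chambers_at t. F \<sigma>') / real (card (chambers_at t)))"
      by (intro sum.cong) (auto simp: panel_average_def chambers_at_def)
    also have "\<dots> = (\<Sum>\<sigma>\<in>chambers_at t. F \<sigma>)"
      using panel_rep_chambers_at[OF t] by simp
    finally show ?thesis .
  qed
  then show ?thesis
    using sum_chambers_by_panels[OF panel_average_image_act[OF F]] sum_chambers_by_panels[OF F]
    by simp
qed

lemma Kset_chamber_translate:
  assumes "\<sigma> \<in> Dn" "\<rho> \<in> Dn" "g \<in> carrier G" "act g ` \<rho> \<in> chambers_at (panel \<sigma>)"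
  shows "g \<in> Kset G act n Dn"
proof -
  have \<sigma>: "\<sigma> \<in> chambers" using D0 assms(1) unfolding orbit_representatives_def by blast
  have "panel \<sigma> \<subseteq> act g ` \<rho> \<inter> \<sigma>"
    using assms(4) panel_subset[of \<sigma>] panel_subset[of "act g ` \<rho>"] by (auto simp: chambers_at_def)
  then have "card (panel \<sigma>) \<le> card (act g ` \<rho> \<inter> \<sigma>)"
    using simplex_finite[OF cfaces_simplex[OF \<sigma>]] by (intro card_mono) auto
  then have "n - 1 \<le> card (act g ` \<rho> \<inter> \<sigma>)"
    using cfaces_card[OF panel_cfaces[OF \<sigma>]] by simp
  then show ?thesis using assms(1-3) unfolding Kset_def by blast
qed

lemma one_in_Kset: "\<sigma> \<in> Dn \<Longrightarrow> \<one> \<in> Kset G act n Dn"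
  using Kset_chamber_translate[of \<sigma> \<sigma> \<one>] D0 image_act_one[OF cfaces_vertices]
  unfolding orbit_representatives_def chambers_at_def by auto

lemma norm_sq_chamber_le:
  assumes \<phi>: "\<phi> \<in> equivariant_maps G act X n \<pi>"
    and c: "\<And>g. g \<in> Kset G act n Dn \<Longrightarrow> (norm (\<pi> g))\<^sup>2 \<le> c"
    and \<sigma>: "\<sigma> \<in> Dn" and \<sigma>': "\<sigma>' \<in> chambers_at (panel \<sigma>)"
  shows "(norm (\<phi> \<sigma>'))\<^sup>2 \<le> c * (norm (\<phi> (orbit_rep Dn \<sigma>')))\<^sup>2"
proof -
  define \<rho> where "\<rho> = orbit_rep Dn \<sigma>'"
  have "\<sigma>' \<in> chambers" using \<sigma>' by (simp add: chambers_at_def)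
  then have \<rho>: "\<rho> \<in> Dn" "\<sigma>' \<in> orbit G act \<rho>" using orbit_rep[OF D0] by (auto simp: \<rho>_def)
  then obtain g where g: "g \<in> carrier G" "\<sigma>' = act g ` \<rho>" by (auto simp: mem_orbit_iff)
  have "\<rho> \<in> chambers" using D0 \<rho>(1) unfolding orbit_representatives_def by blast
  then have "\<phi> \<sigma>' = \<pi> g (\<phi> \<rho>)" using \<phi> g unfolding equivariant_maps_def by simp
  then have "norm (\<phi> \<sigma>') \<le> norm (\<pi> g) * norm (\<phi> \<rho>)" by (simp add: norm_blinfun)
  then have "(norm (\<phi> \<sigma>'))\<^sup>2 \<le> (norm (\<pi> g))\<^sup>2 * (norm (\<phi> \<rho>))\<^sup>2"
    by (metis norm_ge_zero power_mono power_mult_distrib)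
  also have "\<dots> \<le> c * (norm (\<phi> \<rho>))\<^sup>2"
    using c[OF Kset_chamber_translate[OF \<sigma> \<rho>(1) g(1)]] \<sigma>' g(2) by (simp add: mult_right_mono)
  finally show ?thesis by (simp add: \<rho>_def)
qed

lemma norm_sq_P_op_le:
  assumes \<phi>: "\<phi> \<in> equivariant_maps G act X n \<pi>"
    and c: "\<And>g. g \<in> Kset G act n Dn \<Longrightarrow> (norm (\<pi> g))\<^sup>2 \<le> c"
    and \<sigma>: "\<sigma> \<in> Dn"
  shows "(norm (P_op X n vtype \<nu> \<phi> \<sigma>))\<^sup>2 \<le> c * panel_average (\<lambda>\<sigma>'. (norm (\<phi> (orbit_rep Dn \<sigma>')))\<^sup>2) \<sigma>"
proof -
  let ?N = "chambers_at (panel \<sigma>)"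
  have \<sigma>_ch: "\<sigma> \<in> chambers" using D0 \<sigma> unfolding orbit_representatives_def by blast
  have N: "finite ?N" "?N \<noteq> {}"
    using finite_chambers_at[OF \<sigma>_ch] \<sigma>_ch by (auto simp: chambers_at_def)
  have "(norm (P_op X n vtype \<nu> \<phi> \<sigma>))\<^sup>2 \<le> (\<Sum>\<sigma>'\<in>?N. (norm (\<phi> \<sigma>'))\<^sup>2) / real (card ?N)"
    unfolding P_op_eq[OF \<sigma>_ch] by (rule norm_average_sq_le[OF N])
  also have "\<dots> \<le> (\<Sum>\<sigma>'\<in>?N. c * (norm (\<phi> (orbit_rep Dn \<sigma>')))\<^sup>2) / real (card ?N)"
    using norm_sq_chamber_le[OF \<phi> c \<sigma>] by (intro divide_right_mono sum_mono) auto
  also have "\<dots> = c * panel_average (\<lambda>\<sigma>'. (norm (\<phi> (orbit_rep Dn \<sigma>')))\<^sup>2) \<sigma>"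
    by (simp add: panel_average_def sum_distrib_left)
  finally show ?thesis .
qed

lemma cnorm_P_op_le_sqrt:
  assumes \<phi>: "\<phi> \<in> equivariant_maps G act X n \<pi>"
    and c: "\<And>g. g \<in> Kset G act n Dn \<Longrightarrow> (norm (\<pi> g))\<^sup>2 \<le> c"
  shows "cnorm \<mu> G act Dn (P_op X n vtype \<nu> \<phi>) \<le> sqrt c * cnorm \<mu> G act Dn \<phi>"
proof -
  define F where "F = (\<lambda>\<sigma>'. (norm (\<phi> (orbit_rep Dn \<sigma>')))\<^sup>2)"
  have F: "F (act g ` \<sigma>) = F \<sigma>" if "g \<in> carrier G" "\<sigma> \<in> chambers" for g \<sigma>
    using orbit_rep_image_act[OF D0 cfaces_subset that(2,1)] image_act_cfaces that
    by (simp add: F_def)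
  have "(\<Sum>\<sigma>\<in>Dn. (norm (P_op X n vtype \<nu> \<phi> \<sigma>))\<^sup>2 / weight \<sigma>)
      \<le> (\<Sum>\<sigma>\<in>Dn. c * panel_average F \<sigma> / weight \<sigma>)"
    using norm_sq_P_op_le[OF \<phi> c] weight_chamber_pos D0 unfolding F_def orbit_representatives_def
    by (intro sum_mono divide_right_mono) (auto simp: less_imp_le subset_eq)
  also have "\<dots> = c * (\<Sum>\<sigma>\<in>Dn. panel_average F \<sigma> / weight \<sigma>)"
    by (simp add: sum_distrib_left)
  also have "\<dots> = c * (\<Sum>\<sigma>\<in>Dn. F \<sigma> / weight \<sigma>)"
    by (simp only: sum_panel_average[OF F])
  also have "\<dots> = c * (\<Sum>\<sigma>\<in>Dn. (norm (\<phi> \<sigma>))\<^sup>2 / weight \<sigma>)"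
    using orbit_rep_self[OF D0 cfaces_subset] by (simp add: F_def)
  finally show ?thesis
    unfolding cnorm_def weight_def[symmetric] by (simp add: real_sqrt_mult[symmetric])
qed

lemma cnorm_P_op_le:
  assumes rep_one: "\<pi> \<one> = id_blinfun"
    and \<phi>: "\<phi> \<in> equivariant_maps G act X n \<pi>"
    and c: "\<And>g. g \<in> Kset G act n Dn \<Longrightarrow> (norm (\<pi> g))\<^sup>2 \<le> c"
  shows "cnorm \<mu> G act Dn (P_op X n vtype \<nu> \<phi>) \<le> c * cnorm \<mu> G act Dn \<phi>"
proof (cases "\<exists>\<sigma>\<in>Dn. \<phi> \<sigma> \<noteq> 0")
  case True
  then obtain \<sigma> where \<sigma>: "\<sigma> \<in> Dn" "\<phi> \<sigma> \<noteq> 0" by blast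
  have "1 \<le> (norm (\<pi> \<one>))\<^sup>2"
    using one_le_norm_id_blinfun[OF \<sigma>(2)] rep_one by (simp add: one_le_power)
  then have "sqrt c \<le> c" using c[OF one_in_Kset[OF \<sigma>(1)]] by (intro real_sqrt_le_self) simp
  then show ?thesis
    using cnorm_P_op_le_sqrt[OF \<phi> c] cnorm_nonneg[of \<mu> G act Dn \<phi>]
    by (meson mult_right_mono order_trans)
next
  case False
  then have "cnorm \<mu> G act Dn \<phi> = 0" by (simp add: cnorm_def)
  then show ?thesis using cnorm_P_op_le_sqrt[OF \<phi> c] by simp
qed

end

theorem lemma3p7:
  fixes X :: "'v set set" and n :: nat and vtype :: "'v \<Rightarrow> nat"
    and G :: "'g monoid" and T :: "'g topology" and \<mu> :: "'g measure"
    and act :: "'g \<Rightarrow> 'v \<Rightarrow> 'v"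
    and \<pi> :: "'g \<Rightarrow> ('e::banach \<Rightarrow>\<^sub>L 'e)"
    and Dn2 Dn1 Dn :: "'v set set"
    and \<nu> :: "nat set"
  assumes n_pos: "n \<ge> 1"
    and complex: "abstract_simplicial_complex X"
    and pure: "pure_dim X n"
    and part: "partite X n vtype"
    and gallery: "gallery_connected X n"
    and links: "\<forall>\<tau>\<in>cfaces X (n - 1). link_connected_finite_graph X \<tau>"
    and lcgroup: "locally_compact_group G T"
    and haar: "unimodular_haar G T \<mu>"
    and action: "type_preserving_simplicial_action G act X vtype"
    and cocompact: "cocompact_action G act X"
    and stab_open_compact: "\<forall>\<tau>\<in>cfaces X (n - 1) \<union> cfaces X n \<union> cfaces X (n + 1).
        openin T (stab G act \<tau>) \<and> compactin T (stab G act \<tau>)"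
    and rep: "strongly_continuous_rep G T \<pi>"
    and D2: "orbit_representatives G act (cfaces X (n - 1)) Dn2"
    and D1: "orbit_representatives G act (cfaces X n) Dn1"
    and D0: "orbit_representatives G act (cfaces X (n + 1)) Dn"
    and D21: "\<forall>\<tau>\<in>Dn2. \<exists>\<sigma>\<in>Dn1. \<tau> \<subseteq> \<sigma>"
    and D20: "\<forall>\<tau>\<in>Dn2. \<exists>\<sigma>\<in>Dn. \<tau> \<subseteq> \<sigma>"
    and D10: "\<forall>\<tau>\<in>Dn1. \<exists>\<sigma>\<in>Dn. \<tau> \<subseteq> \<sigma>"
    and nu: "\<nu> \<subseteq> {0..n}" "card \<nu> = n"
  shows "op_norm_on (equivariant_maps G act X n \<pi>) (cnorm \<mu> G act Dn) (P_op X n vtype \<nu>)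
           \<le> (SUP g\<in>Kset G act n Dn. ereal ((norm (\<pi> g))\<^sup>2))"
proof -
  have topological_group: "topological_group G T"
    using lcgroup by (simp add: locally_compact_group_def)
  have "simplicial_group_action G act X vtype"
    using topological_group complex action
    by (simp add: simplicial_group_action_def simplicial_group_action_axioms_def topological_group_def)
  then have "haar_simplicial_action G act X vtype T \<mu>"
    using topological_group haar
    by (simp add: haar_simplicial_action_def haar_simplicial_action_axioms_def)
  moreover have "\<forall>\<tau>\<in>cfaces X (n - 1). finite {v. {v} \<in> link X \<tau>}"
    using links by (simp add: link_connected_finite_graph_def Let_def)
  ultimately interpret panel_averaging G act X vtype T \<mu> n \<nu> Dn1 Dn
    using n_pos pure part cocompact stab_open_compact D1 D0 nu
    by (simp add: panel_averaging_def panel_averaging_axioms_def)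
  have rep_one: "\<pi> \<one>\<^bsub>G\<^esub> = id_blinfun" using rep by (simp add: strongly_continuous_rep_def)
  show ?thesis
  proof (rule le_SUP_ereal_if_bounds, rule op_norm_on_le)
    show "cnorm \<mu> G act Dn (P_op X n vtype \<nu> \<phi>) \<le> c * cnorm \<mu> G act Dn \<phi>"
      if "\<And>g. g \<in> Kset G act n Dn \<Longrightarrow> (norm (\<pi> g))\<^sup>2 \<le> c"
        and "\<phi> \<in> equivariant_maps G act X n \<pi>" for c \<phi>
      using cnorm_P_op_le[OF rep_one that(2,1)] .
  qed (rule cnorm_nonneg)
qed

end
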